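(* Let $\lambda>0$. There exists $b_0\in{\rm BMO}_{\triangle_\lambda}(\mathbb R_+)$ such that $[b_0,R_\lambda]$ is not of weak type $(1,1)$ on $(\mathbb R_+,\mu)$, i.e. there is no constant $C$ with $\mu(\{x\in\mathbb R_+:|[b_0,R_\lambda]f(x)|>t\})\le \frac Ct\|f\|_{L^1(\mathbb R_+,\mu)}$ for all $f$ and all $t>0$.
   Context: On $\mathbb R_+=(0,\infty)$, $d\mu(x)=x^{2\lambda}dx$; intervals are $B=(a,b)\subset\mathbb R_+$. ${\rm BMO}_{\triangle_\lambda}(\mathbb R_+)$: $f\in L^1_{loc}(\mu)$ with $\sup_B\frac1{\mu(B)}\int_B|f-f_B|d\mu<\infty$, $f_B=\frac1{\mu(B)}\int_Bf\,d\mu$. $R_\lambda=\frac{d}{dx}\triangle_\lambda^{-1/2}$ is the Bessel Riesz transform associated with $\triangle_\lambda=-\frac{d^2}{dx^2}-\frac{2\lambda}x\frac d{dx}$: $R_\lambda f(x)=\mathrm{p.v.}\int_0^\infty R_\lambda(x,y)f(y)d\mu(y)$, $R_\lambda(x,y)=-\frac{2\lambda}{\pi}\int_0^\pi\frac{(x-y\cos\theta)(\sin\theta)^{2\lambda-1}}{(x^2+y^2-2xy\cos\theta)^{\lambda+1}}d\theta$; $[b,R_\lambda]f=bR_\lambda f-R_\lambda(bf)$. *)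

theory Defs
  imports "HOL-Analysis.Analysis"
begin

definition bessel_mu :: "real \<Rightarrow> real measure" where
  "bessel_mu lam = density (restrict_space lborel {0<..}) (\<lambda>x. ennreal (x powr (2 * lam)))"

definition bessel_avg :: "real \<Rightarrow> (real \<Rightarrow> real) \<Rightarrow> real \<Rightarrow> real \<Rightarrow> real" where
  "bessel_avg lam f a b =
     (1 / measure (bessel_mu lam) {a<..<b}) * (\<integral>y\<in>{a<..<b}. f y \<partial>bessel_mu lam)"

definition BMO_bessel :: "real \<Rightarrow> (real \<Rightarrow> real) \<Rightarrow> bool" where
  "BMO_bessel lam f \<longleftrightarrow>
     f \<in> borel_measurable (bessel_mu lam) \<and>
     (\<forall>a b. 0 \<le> a \<and> a < b \<longrightarrow> set_integrable (bessel_mu lam) {a<..<b} f) \<and>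
     (\<exists>C. \<forall>a b. 0 \<le> a \<and> a < b \<longrightarrow>
        (1 / measure (bessel_mu lam) {a<..<b}) *
          (\<integral>y\<in>{a<..<b}. \<bar>f y - bessel_avg lam f a b\<bar> \<partial>bessel_mu lam) \<le> C)"

definition riesz_kernel :: "real \<Rightarrow> real \<Rightarrow> real \<Rightarrow> real" where
  "riesz_kernel lam x y =
     - (2 * lam / pi) *
       (LBINT \<theta>=0..pi. (x - y * cos \<theta>) * (sin \<theta>) powr (2 * lam - 1)
                         / (x\<^sup>2 + y\<^sup>2 - 2 * x * y * cos \<theta>) powr (lam + 1))"

definition riesz_bessel :: "real \<Rightarrow> (real \<Rightarrow> real) \<Rightarrow> real \<Rightarrow> real" where
  "riesz_bessel lam f x =
     Lim (at_right 0)
       (\<lambda>\<epsilon>. \<integral>y\<in>{y. \<bar>x - y\<bar> > \<epsilon>}. riesz_kernel lam x y * f y \<partial>bessel_mu lam)"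

definition riesz_commutator :: "real \<Rightarrow> (real \<Rightarrow> real) \<Rightarrow> (real \<Rightarrow> real) \<Rightarrow> real \<Rightarrow> real" where
  "riesz_commutator lam b f x = b x * riesz_bessel lam f x - riesz_bessel lam (\<lambda>y. b y * f y) x"

definition bdd_cpt_supp :: "(real \<Rightarrow> real) \<Rightarrow> bool" where
  "bdd_cpt_supp f \<longleftrightarrow> f \<in> borel_measurable borel \<and> (\<exists>M. \<forall>x. \<bar>f x\<bar> \<le> M) \<and>
     (\<exists>a b. 0 < a \<and> a < b \<and> (\<forall>x. x \<notin> {a..b} \<longrightarrow> f x = 0))"

end

theory Submission
  imports Defs
begin

text \<open>The witness is \<open>b0 x = ln_plus (x/3)\<close> (with \<open>ln_plus t = ln (max 1 t)\<close>), tested against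
  \<open>f = indicator {1..2}\<close>. Since \<open>b0\<close> vanishes on \<open>[1,2]\<close>, the commutator is \<open>b0 * R f\<close>, and for
  \<open>x \<ge> 4\<close> the kernel is negative of size comparable to \<open>x^(-2 lam - 1)\<close> uniformly in \<open>y \<in> [1,2]\<close>. Hence
  \<open>|[b0, R] f x| \<ge> c ln (x/4) x^(-2 lam - 1)\<close>: on \<open>[Z, 2Z]\<close> the commutator exceeds a level
  \<open>t \<approx> ln Z * Z^(-2 lam - 1)\<close> while \<open>mu [Z, 2Z] \<ge> Z^(2 lam + 1)\<close>, so \<open>t * mu {|[b0, R] f| > t}\<close>
  grows like \<open>ln Z\<close> and no weak type (1,1) bound can hold. The logarithmic growth of \<open>b0\<close> is still
  compatible with BMO because \<open>mu\<close> is doubling.\<close>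

section \<open>The measure \<open>mu\<close>\<close>

lemma space_bessel_mu [simp]: "space (bessel_mu lam) = {0<..}"
  by (simp add: bessel_mu_def space_restrict_space)

lemma sets_bessel_mu: "sets (bessel_mu lam) = sets (restrict_space lborel {0<..})"
  by (simp add: bessel_mu_def)

lemma sets_bessel_muI: "A \<in> sets borel \<Longrightarrow> A \<subseteq> {0<..} \<Longrightarrow> A \<in> sets (bessel_mu lam)"
  by (auto simp: sets_bessel_mu sets_restrict_space_iff)

lemma borel_measurable_bessel_mu:
  "h \<in> borel_measurable borel \<Longrightarrow> h \<in> borel_measurable (bessel_mu lam)"
  unfolding bessel_mu_def
  by (subst measurable_cong_sets[OF sets_density refl]) (auto intro!: measurable_restrict_space1)

lemma integral_bessel_mu:
  fixes g :: "real \<Rightarrow> real"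
  assumes [measurable]: "g \<in> borel_measurable borel"
  shows "(\<integral>y. g y \<partial>bessel_mu lam) = (\<integral>y. indicator {0<..} y * (y powr (2*lam) * g y) \<partial>lborel)"
  unfolding bessel_mu_def
  by (subst integral_density) (auto intro!: measurable_restrict_space1 simp: integral_restrict_space)

lemma emeasure_bessel_mu:
  assumes "A \<in> sets borel" "A \<subseteq> {0<..}"
  shows "emeasure (bessel_mu lam) A = (\<integral>\<^sup>+ x. ennreal (x powr (2*lam)) * indicator A x \<partial>lborel)"
proof -
  have "emeasure (bessel_mu lam) A = (\<integral>\<^sup>+ x. ennreal (x powr (2*lam)) * indicator A x \<partial>restrict_space lborel {0<..})"
    using assms unfolding bessel_mu_def
    by (subst emeasure_density) (auto intro!: measurable_restrict_space1 simp: sets_restrict_space_iff)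
  also have "\<dots> = (\<integral>\<^sup>+ x. ennreal (x powr (2*lam)) * indicator A x \<partial>lborel)"
    using assms by (subst nn_integral_restrict_space) (auto intro!: nn_integral_cong split: split_indicator)
  finally show ?thesis .
qed

lemma emeasure_bessel_mu_ge:
  assumes "A \<in> sets borel" "A \<subseteq> {0<..}" "0 \<le> c" "\<And>x. x \<in> A \<Longrightarrow> c \<le> x powr (2*lam)"
  shows "ennreal c * emeasure lborel A \<le> emeasure (bessel_mu lam) A"
  using assms
  by (simp add: emeasure_bessel_mu nn_integral_cmult_indicator[symmetric])
     (intro nn_integral_mono, auto split: split_indicator intro!: ennreal_leI)

lemma emeasure_bessel_mu_le:
  assumes "A \<in> sets borel" "A \<subseteq> {0<..}" "\<And>x. x \<in> A \<Longrightarrow> x powr (2*lam) \<le> c"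
  shows "emeasure (bessel_mu lam) A \<le> ennreal c * emeasure lborel A"
  using assms
  by (simp add: emeasure_bessel_mu nn_integral_cmult_indicator[symmetric])
     (intro nn_integral_mono, auto split: split_indicator intro!: ennreal_leI)

lemma emeasure_bessel_mu_bounded_finite:
  assumes "0 \<le> lam" "A \<in> sets borel" "A \<subseteq> {0<..c}"
  shows "emeasure (bessel_mu lam) A < \<infinity>"
proof -
  have "emeasure (bessel_mu lam) A \<le> ennreal (c powr (2*lam)) * emeasure lborel A"
    using assms by (intro emeasure_bessel_mu_le) (auto intro!: powr_mono2)
  also have "\<dots> \<le> ennreal (c powr (2*lam)) * emeasure lborel {0..c}"
    using assms by (intro mult_left_mono emeasure_mono) auto
  also have "\<dots> < \<infinity>"
    by (cases "0 \<le> c") (simp_all add: ennreal_mult_less_top)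
  finally show ?thesis .
qed

lemma emeasure_bessel_mu_interval_finite:
  "0 \<le> lam \<Longrightarrow> 0 \<le> a \<Longrightarrow> emeasure (bessel_mu lam) {a<..<b} < \<infinity>"
  by (rule emeasure_bessel_mu_bounded_finite[where c=b]) auto

lemma measure_bessel_mu_interval_ge:
  assumes "0 \<le> lam" "0 \<le> a" "a \<le> a'" "0 < a'" "a' < b"
  shows "a' powr (2*lam) * (b - a') \<le> measure (bessel_mu lam) {a<..<b}"
proof -
  have "ennreal (a' powr (2*lam)) * emeasure lborel {a'<..<b} \<le> emeasure (bessel_mu lam) {a'<..<b}"
    using assms by (intro emeasure_bessel_mu_ge) (auto intro!: powr_mono2)
  also have "\<dots> \<le> emeasure (bessel_mu lam) {a<..<b}"
    using assms by (intro emeasure_mono sets_bessel_muI) auto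
  also have "\<dots> = ennreal (measure (bessel_mu lam) {a<..<b})"
    using emeasure_bessel_mu_interval_finite[OF assms(1,2), of b] by (intro emeasure_eq_ennreal_measure) auto
  finally show ?thesis
    using assms by (simp add: ennreal_mult[symmetric] ennreal_le_iff)
qed

lemma emeasure_bessel_mu_dyadic_ge:
  assumes "0 \<le> lam" "0 < z"
  shows "ennreal (z powr (2*lam+1)) \<le> emeasure (bessel_mu lam) {z..2*z}"
proof -
  have "ennreal (z powr (2*lam+1)) = ennreal (z powr (2*lam)) * emeasure lborel {z..2*z}"
    using assms by (simp add: powr_add ennreal_mult)
  also have "\<dots> \<le> emeasure (bessel_mu lam) {z..2*z}"
    using assms by (intro emeasure_bessel_mu_ge) (auto intro!: powr_mono2)
  finally show ?thesis .
qed

lemma measure_bessel_mu_interval_pos: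
  assumes "0 \<le> lam" "0 \<le> a" "a < b"
  shows "0 < measure (bessel_mu lam) {a<..<b}"
proof -
  have "((a+b)/2) powr (2*lam) * (b - (a+b)/2) \<le> measure (bessel_mu lam) {a<..<b}"
    using assms by (intro measure_bessel_mu_interval_ge) auto
  moreover have "0 < ((a+b)/2) powr (2*lam) * (b - (a+b)/2)"
    using assms by simp
  ultimately show ?thesis by linarith
qed

section \<open>Integrability of powers of the sine\<close>

lemma sin_ge_half_self:
  fixes x :: real
  assumes "0 \<le> x" "x \<le> 1"
  shows "x / 2 \<le> sin x"
proof -
  have "1/2 \<le> cos t" if "0 \<le> t" "t \<le> 1" for t :: real
  proof -
    have "cos (pi/3) \<le> cos t"
      using that pi_gt3 by (intro cos_monotone_0_pi_le) auto
    then show ?thesis by (simp add: cos_60)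
  qed
  then have "sin 0 - 0/2 \<le> sin x - x/2"
    using assms
    by (intro DERIV_nonneg_imp_nondecreasing[of 0 x "\<lambda>t. sin t - t/2"])
       (auto intro!: exI derivative_eq_intros)
  then show ?thesis by simp
qed

lemma sin_ge_half_min_dist:
  fixes x :: real
  assumes "0 \<le> x" "x \<le> pi"
  shows "min x (min (pi - x) 1) / 2 \<le> sin x"
proof -
  have sin1: "1/2 \<le> sin (1::real)"
    using sin_ge_half_self[of 1] by simp
  consider "x \<le> 1" | "pi - x \<le> 1" | "1 \<le> x" "x \<le> pi/2" | "pi/2 \<le> x" "x \<le> pi - 1"
    by linarith
  then show ?thesis
  proof cases
    case 1
    then show ?thesis using sin_ge_half_self[of x] assms by auto
  next
    case 2
    then show ?thesis using sin_ge_half_self[of "pi - x"] assms by auto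
  next
    case 3
    then have "sin 1 \<le> sin x"
      using pi_gt3 by (intro sin_monotone_2pi_le) auto
    moreover have "min x (min (pi - x) 1) / 2 \<le> 1/2" by simp
    ultimately show ?thesis using sin1 by linarith
  next
    case 4
    then have "sin 1 \<le> sin (pi - x)"
      using pi_gt3 by (intro sin_monotone_2pi_le) auto
    moreover have "min x (min (pi - x) 1) / 2 \<le> 1/2" by simp
    ultimately show ?thesis using sin1 by simp
  qed
qed

lemma integrable_powr_Icc0:
  fixes q c :: real
  assumes "q > -1"
  shows "integrable lborel (\<lambda>t. indicator {0..c} t * t powr q)"
proof (cases "0 \<le> c")
  case True
  then have "(\<lambda>t. t powr q) absolutely_integrable_on {0..c}"
    using assms by (intro nonnegative_absolutely_integrable_1 integrable_on_powr_from_0) auto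
  then show ?thesis
    by (simp add: set_integrable_def integrable_completion)
qed simp

lemma integrable_powr_Icc0_reflect:
  fixes q c :: real
  assumes "q > -1"
  shows "integrable lborel (\<lambda>t. indicator {0..c} t * (c - t) powr q)"
proof -
  have "integrable lborel (\<lambda>t. indicator {0..c} (c + (-1) * t) * (c + (-1) * t) powr q)"
    using integrable_powr_Icc0[OF assms, of c] by (subst lborel_integrable_real_affine_iff) auto
  moreover have "(\<lambda>t. indicator {0..c} (c + (-1) * t) * (c + (-1) * t) powr q)
      = (\<lambda>t. indicator {0..c} t * (c - t) powr q)"
    by (auto simp: fun_eq_iff split: split_indicator)
  ultimately show ?thesis by simp
qed

lemma sin_powr_le:
  fixes q t :: real
  assumes "0 \<le> t" "t \<le> pi"
  shows "sin t powr q \<le> (1 + 2 powr (-q)) * (1 + t powr q + (pi - t) powr q)"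
proof -
  have "1 * 1 \<le> (1 + 2 powr (-q)) * (1 + t powr q + (pi - t) powr q)"
    by (intro mult_mono) auto
  then have one_le: "1 \<le> (1 + 2 powr (-q)) * (1 + t powr q + (pi - t) powr q)"
    by simp
  show ?thesis
  proof (cases "sin t = 0 \<or> q \<ge> 0")
    case True
    then have "sin t powr q \<le> 1"
      using assms sin_ge_zero[OF assms] by (cases "sin t = 0") (auto intro!: powr_le1)
    then show ?thesis using one_le by linarith
  next
    case False
    define m where "m = min t (min (pi - t) 1)"
    have "0 < sin t" "q < 0"
      using False sin_ge_zero[OF assms] by auto
    then have "t \<noteq> 0" "t \<noteq> pi" by auto
    then have m_pos: "0 < m"
      using assms by (simp add: m_def)
    have "sin t powr q \<le> (m/2) powr q"
      using \<open>q < 0\<close> m_pos sin_ge_half_min_dist[OF assms] by (intro powr_mono2') (auto simp: m_def)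
    also have "\<dots> = m powr q * 2 powr (-q)"
      using m_pos by (simp add: powr_divide powr_minus_divide)
    also have "m = t \<or> m = pi - t \<or> m = 1"
      unfolding m_def by linarith
    then have "m powr q \<le> 1 + t powr q + (pi - t) powr q"
      by (elim disjE) (simp_all add: add_increasing add_increasing2)
    then have "m powr q * 2 powr (-q) \<le> (1 + t powr q + (pi - t) powr q) * 2 powr (-q)"
      by (intro mult_right_mono) auto
    also have "\<dots> \<le> (1 + 2 powr (-q)) * (1 + t powr q + (pi - t) powr q)"
      by (simp add: algebra_simps)
    finally show ?thesis .
  qed
qed

lemma integrable_sin_powr:
  fixes q :: real
  assumes "q > -1"
  shows "integrable lborel (\<lambda>t. indicator {0..pi} t * sin t powr q)"
proof (rule Bochner_Integration.integrable_bound)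
  show "integrable lborel (\<lambda>t. (1 + 2 powr (-q)) *
      (indicator {0..pi} t + indicator {0..pi} t * t powr q + indicator {0..pi} t * (pi - t) powr q))"
    using integrable_powr_Icc0[OF assms] integrable_powr_Icc0_reflect[OF assms]
    by (intro integrable_mult_right Bochner_Integration.integrable_add) auto
  show "AE t in lborel. norm (indicator {0..pi} t * sin t powr q) \<le> norm ((1 + 2 powr (-q)) *
      (indicator {0..pi} t + indicator {0..pi} t * t powr q + indicator {0..pi} t * (pi - t) powr q))"
    using sin_powr_le[of _ q] by (intro AE_I2) (auto split: split_indicator simp: algebra_simps)
qed measurable

lemma integral_sin_powr_pos:
  fixes q :: real
  assumes "q > -1"
  shows "0 < (\<integral>t. indicator {0..pi} t * sin t powr q \<partial>lborel)"
proof -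
  have "sin t powr q \<ge> min 1 ((1/2) powr q)" if "t \<in> {1..2}" for t
  proof -
    have "min t (min (pi - t) 1) = 1"
      using that pi_gt3 by auto
    then have "1/2 \<le> sin t" "sin t \<le> 1"
      using that pi_gt3 sin_ge_half_min_dist[of t] by auto
    show ?thesis
    proof (cases "q \<ge> 0")
      case True
      then have "(1/2) powr q \<le> sin t powr q"
        using \<open>1/2 \<le> sin t\<close> by (intro powr_mono2) auto
      then show ?thesis by linarith
    next
      case False
      then have "1 powr q \<le> sin t powr q"
        using \<open>1/2 \<le> sin t\<close> \<open>sin t \<le> 1\<close> by (intro powr_mono2') auto
      then show ?thesis by simp
    qed
  qed
  then have "(\<integral>t. indicator {1..2::real} t * min 1 ((1/2) powr q) \<partial>lborel)
      \<le> (\<integral>t. indicator {0..pi} t * sin t powr q \<partial>lborel)"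
    using pi_gt3 integrable_sin_powr[OF assms]
    by (intro integral_mono) (auto split: split_indicator)
  moreover have "0 < (\<integral>t. indicator {1..2::real} t * min 1 ((1/2) powr q) \<partial>lborel)"
    by simp
  ultimately show ?thesis by linarith
qed

section \<open>The Riesz kernel away from the diagonal\<close>

definition riesz_integrand :: "real \<Rightarrow> real \<Rightarrow> real \<Rightarrow> real \<Rightarrow> real" where
  "riesz_integrand lam x y t =
     (x - y * cos t) * (sin t) powr (2 * lam - 1) / (x\<^sup>2 + y\<^sup>2 - 2 * x * y * cos t) powr (lam + 1)"

lemma riesz_kernel_eq_integral:
  "riesz_kernel lam x y =
     - (2 * lam / pi) * (\<integral>t. indicator {0..pi} t * riesz_integrand lam x y t \<partial>lborel)"
proof -
  have "interval_lebesgue_integral lborel 0 (ereal pi) f = (\<integral>t. indicator {0..pi} t *\<^sub>R f t \<partial>lborel)"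
    for f :: "real \<Rightarrow> real"
    using interval_integral_Icc[of 0 pi f] by (simp add: set_lebesgue_integral_def zero_ereal_def)
  then show ?thesis
    unfolding riesz_kernel_def riesz_integrand_def by simp
qed

lemma borel_measurable_riesz_kernel [measurable]:
  "(\<lambda>(x, y). riesz_kernel lam x y) \<in> borel_measurable (borel \<Otimes>\<^sub>M borel)"
  unfolding riesz_kernel_eq_integral riesz_integrand_def by measurable

lemma riesz_integrand_bounds:
  fixes x y t :: real
  assumes "0 < lam" "0 < x" "0 \<le> y" "y \<le> x / 2"
  shows "(x/2) * sin t powr (2*lam-1) / (3*x/2)\<^sup>2 powr (lam+1) \<le> riesz_integrand lam x y t"
    and "riesz_integrand lam x y t \<le> (3*x/2) * sin t powr (2*lam-1) / (x/2)\<^sup>2 powr (lam+1)"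
proof -
  let ?s = "sin t powr (2*lam-1)"
  let ?D = "x\<^sup>2 + y\<^sup>2 - 2 * x * y * cos t"
  have y_cos: "\<bar>y * cos t\<bar> \<le> y"
    using assms abs_cos_le_one[of t] by (simp add: abs_mult mult_left_le)
  then have num: "x/2 \<le> x - y * cos t" "x - y * cos t \<le> 3*x/2"
    using assms by linarith+
  have "?D = (x - y)\<^sup>2 + 2 * x * y * (1 - cos t)" "?D = (x + y)\<^sup>2 - 2 * x * y * (1 + cos t)"
    by (simp_all add: power2_eq_square algebra_simps)
  moreover have "0 \<le> 1 - cos t" "0 \<le> 1 + cos t"
    using cos_ge_minus_one[of t] cos_le_one[of t] by linarith+
  then have "0 \<le> 2 * x * y * (1 - cos t)" "0 \<le> 2 * x * y * (1 + cos t)"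
    using assms by simp_all
  moreover have "(x/2)\<^sup>2 \<le> (x - y)\<^sup>2" "(x + y)\<^sup>2 \<le> (3*x/2)\<^sup>2"
    using assms by (simp_all add: power_mono)
  ultimately have den: "(x/2)\<^sup>2 \<le> ?D" "?D \<le> (3*x/2)\<^sup>2"
    by linarith+
  have den_powr: "(x/2)\<^sup>2 powr (lam+1) \<le> ?D powr (lam+1)" "?D powr (lam+1) \<le> (3*x/2)\<^sup>2 powr (lam+1)"
    using den assms by (auto intro!: powr_mono2 order_trans[OF _ den(1)])
  have pos: "0 < (x/2)\<^sup>2 powr (lam+1)"
    using assms by simp
  have s_nonneg: "0 \<le> ?s"
    by simp
  show "(x/2) * ?s / (3*x/2)\<^sup>2 powr (lam+1) \<le> riesz_integrand lam x y t"
    unfolding riesz_integrand_def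
    by (rule frac_le) (use mult_right_mono[OF num(1) s_nonneg] num den_powr pos assms in auto)
  show "riesz_integrand lam x y t \<le> (3*x/2) * ?s / (x/2)\<^sup>2 powr (lam+1)"
    unfolding riesz_integrand_def
    by (rule frac_le) (use mult_right_mono[OF num(2) s_nonneg] num den_powr pos assms in auto)
qed

lemma scaled_over_square_powr:
  fixes a b x lam :: real
  assumes "0 < b" "0 < x"
  shows "a * x / (b * x)\<^sup>2 powr (lam + 1) = a / b powr (2*lam+2) / x powr (2*lam+1)"
proof -
  have "(b * x)\<^sup>2 powr (lam + 1) = ((b * x) powr 2) powr (lam + 1)"
    using assms by (simp add: powr_numeral)
  also have "\<dots> = (b * x) powr (2*lam+2)"
    by (simp only: powr_powr) (simp add: algebra_simps)
  also have "\<dots> = b powr (2*lam+2) * x powr (2*lam+2)"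
    using assms by (simp add: powr_mult)
  also have "x powr (2*lam+2) = x powr (2*lam+1) * x"
    using assms powr_add[of x "2*lam+1" 1] by (simp add: add.assoc)
  finally show ?thesis
    using assms by (simp add: field_simps)
qed

lemma integral_riesz_integrand_bounds:
  fixes x y :: real
  assumes lam: "0 < lam" and xy: "0 < x" "0 \<le> y" "y \<le> x / 2"
  defines "S \<equiv> \<integral>t. indicator {0..pi} t * sin t powr (2*lam-1) \<partial>lborel"
  shows "(x/2) / (3*x/2)\<^sup>2 powr (lam+1) * S \<le> (\<integral>t. indicator {0..pi} t * riesz_integrand lam x y t \<partial>lborel)"
    and "(\<integral>t. indicator {0..pi} t * riesz_integrand lam x y t \<partial>lborel) \<le> (3*x/2) / (x/2)\<^sup>2 powr (lam+1) * S"
proof -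
  let ?lo = "(x/2) / (3*x/2)\<^sup>2 powr (lam+1)" and ?hi = "(3*x/2) / (x/2)\<^sup>2 powr (lam+1)"
  let ?F = "\<lambda>t. indicator {0..pi} t * riesz_integrand lam x y t"
    and ?s = "\<lambda>t. indicator {0..pi} t * sin t powr (2*lam-1)"
  have s_int: "integrable lborel ?s"
    using lam by (intro integrable_sin_powr) auto
  have F_bounds: "?lo * ?s t \<le> ?F t" "?F t \<le> ?hi * ?s t" for t
    using riesz_integrand_bounds[OF lam xy, of t] by (auto split: split_indicator simp: mult.commute)
  have "0 \<le> ?lo * ?s t" for t
    using xy by simp
  then have "0 \<le> ?F t" for t
    using F_bounds(1) order_trans by blast
  then have F_le: "norm (?F t) \<le> norm (?hi * ?s t)" for t
    using F_bounds(2)[of t] by (simp only: real_norm_def abs_of_nonneg)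
  have F_int: "integrable lborel ?F"
  proof (rule Bochner_Integration.integrable_bound)
    show "integrable lborel (\<lambda>t. ?hi * ?s t)"
      using s_int by simp
    show "AE t in lborel. norm (?F t) \<le> norm (?hi * ?s t)"
      using F_le by simp
  qed (simp add: riesz_integrand_def)
  show "?lo * S \<le> (\<integral>t. ?F t \<partial>lborel)"
    unfolding S_def using integral_mono[OF integrable_mult_right[OF s_int] F_int F_bounds(1)] by simp
  show "(\<integral>t. ?F t \<partial>lborel) \<le> ?hi * S"
    unfolding S_def using integral_mono[OF F_int integrable_mult_right[OF s_int] F_bounds(2)] by simp
qed

lemma riesz_kernel_off_diagonal:
  assumes "0 < lam"
  obtains c C where "0 < c"
    "\<And>x y. 0 < x \<Longrightarrow> 0 \<le> y \<Longrightarrow> y \<le> x / 2 \<Longrightarrow> c / x powr (2*lam+1) \<le> - riesz_kernel lam x y"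
    "\<And>x y. 0 < x \<Longrightarrow> 0 \<le> y \<Longrightarrow> y \<le> x / 2 \<Longrightarrow> - riesz_kernel lam x y \<le> C / x powr (2*lam+1)"
proof
  define S where "S = (\<integral>t. indicator {0..pi} t * sin t powr (2*lam-1) \<partial>lborel)"
  define c where "c = 2 * lam / pi * S * ((1/2) / (3/2) powr (2*lam+2))"
  define C where "C = 2 * lam / pi * S * ((3/2) / (1/2) powr (2*lam+2))"
  show "0 < c"
    unfolding c_def S_def using assms integral_sin_powr_pos[of "2*lam-1"] by simp
  fix x y :: real
  assume xy: "0 < x" "0 \<le> y" "y \<le> x / 2"
  have kernel: "- riesz_kernel lam x y =
      2 * lam / pi * (\<integral>t. indicator {0..pi} t * riesz_integrand lam x y t \<partial>lborel)"
    by (simp add: riesz_kernel_eq_integral)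
  have "c / x powr (2*lam+1) = 2 * lam / pi * ((x/2) / (3*x/2)\<^sup>2 powr (lam+1) * S)"
    using scaled_over_square_powr[of "3/2" x "1/2" lam] xy by (simp add: c_def)
  also have "\<dots> \<le> - riesz_kernel lam x y"
    unfolding kernel S_def using assms integral_riesz_integrand_bounds(1)[OF assms xy]
    by (intro mult_left_mono) auto
  finally show "c / x powr (2*lam+1) \<le> - riesz_kernel lam x y" .
  have "- riesz_kernel lam x y \<le> 2 * lam / pi * ((3*x/2) / (x/2)\<^sup>2 powr (lam+1) * S)"
    unfolding kernel S_def using assms integral_riesz_integrand_bounds(2)[OF assms xy]
    by (intro mult_left_mono) auto
  also have "\<dots> = C / x powr (2*lam+1)"
    using scaled_over_square_powr[of "1/2" x "3/2" lam] xy by (simp add: C_def)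
  finally show "- riesz_kernel lam x y \<le> C / x powr (2*lam+1)" .
qed

section \<open>The commutator with \<open>ln_plus (x/3)\<close>\<close>

lemma riesz_bessel_eq_integral_off_support:
  assumes "0 < \<delta>" "\<And>y. \<bar>x - y\<bar> < \<delta> \<Longrightarrow> h y = 0"
  shows "riesz_bessel lam h x = (\<integral>y. riesz_kernel lam x y * h y \<partial>bessel_mu lam)"
proof -
  have "(\<integral>y\<in>{y. \<bar>x - y\<bar> > \<epsilon>}. riesz_kernel lam x y * h y \<partial>bessel_mu lam)
      = (\<integral>y. riesz_kernel lam x y * h y \<partial>bessel_mu lam)" if "\<epsilon> < \<delta>" for \<epsilon>
    unfolding set_lebesgue_integral_def
    using assms that by (intro Bochner_Integration.integral_cong) (auto split: split_indicator)
  then have "eventually (\<lambda>\<epsilon>. (\<integral>y\<in>{y. \<bar>x - y\<bar> > \<epsilon>}. riesz_kernel lam x y * h y \<partial>bessel_mu lam)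
      = (\<integral>y. riesz_kernel lam x y * h y \<partial>bessel_mu lam)) (at_right 0)"
    using \<open>0 < \<delta>\<close> unfolding eventually_at_right_field by blast
  then show ?thesis
    unfolding riesz_bessel_def by (intro tendsto_Lim tendsto_eventually) auto
qed

definition ln_plus :: "real \<Rightarrow> real" where
  "ln_plus t = ln (max 1 t)"

lemma borel_measurable_ln_plus [measurable]: "ln_plus \<in> borel_measurable borel"
  unfolding ln_plus_def by measurable

lemma ln_plus_nonneg: "0 \<le> ln_plus t"
  by (simp add: ln_plus_def)

lemma ln_plus_eq_0: "t \<le> 1 \<Longrightarrow> ln_plus t = 0"
  by (simp add: ln_plus_def)

lemma ln_plus_eq_ln: "1 \<le> t \<Longrightarrow> ln_plus t = ln t"
  by (simp add: ln_plus_def)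

lemma ln_plus_increment_bounds:
  assumes "0 < s" "s \<le> t"
  shows "0 \<le> ln_plus t - ln_plus s" "ln_plus t - ln_plus s \<le> ln t - ln s"
  using assms by (auto simp: ln_plus_def max_def)

text \<open>As \<open>ln_plus (y/3)\<close> vanishes on \<open>[1,2]\<close>, the second term of the commutator is the Riesz
  transform of \<open>0\<close>.\<close>
lemma riesz_commutator_ln_plus_indicator:
  "riesz_commutator lam (\<lambda>x. ln_plus (x/3)) (indicator {1..2}) x =
     ln_plus (x/3) * (\<integral>y. riesz_kernel lam x y * indicator {1..2} y \<partial>bessel_mu lam)"
proof -
  have "(\<lambda>y. ln_plus (y/3) * indicator {1..2} y) = (\<lambda>y. 0)"
    by (auto simp: fun_eq_iff ln_plus_eq_0 split: split_indicator)
  moreover have "riesz_bessel lam (\<lambda>y. 0) x = 0"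
    by (subst riesz_bessel_eq_integral_off_support[of 1]) auto
  moreover have "ln_plus (x/3) * riesz_bessel lam (indicator {1..2}) x =
      ln_plus (x/3) * (\<integral>y. riesz_kernel lam x y * indicator {1..2} y \<partial>bessel_mu lam)"
  proof (cases "x \<le> 3")
    case False
    then show ?thesis
      by (subst riesz_bessel_eq_integral_off_support[of 1]) (auto split: split_indicator)
  qed (simp add: ln_plus_eq_0)
  ultimately show ?thesis
    by (simp add: riesz_commutator_def)
qed

lemma integral_riesz_kernel_indicator_lower:
  assumes lam: "0 < lam"
  obtains c where "0 < c" "\<And>x. 4 \<le> x \<Longrightarrow>
    c / x powr (2*lam+1) \<le> - (\<integral>y. riesz_kernel lam x y * indicator {1..2} y \<partial>bessel_mu lam)"
proof -
  obtain c C where "0 < c"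
    and K_lower: "\<And>x y. 0 < x \<Longrightarrow> 0 \<le> y \<Longrightarrow> y \<le> x / 2 \<Longrightarrow> c / x powr (2*lam+1) \<le> - riesz_kernel lam x y"
    and K_upper: "\<And>x y. 0 < x \<Longrightarrow> 0 \<le> y \<Longrightarrow> y \<le> x / 2 \<Longrightarrow> - riesz_kernel lam x y \<le> C / x powr (2*lam+1)"
    using riesz_kernel_off_diagonal[OF lam] by blast
  define m where "m = measure (bessel_mu lam) {1..2}"
  have fin: "emeasure (bessel_mu lam) {1..2} < \<infinity>"
    using lam by (intro emeasure_bessel_mu_bounded_finite[where c=2]) auto
  have "ennreal 1 * emeasure lborel {1..2::real} \<le> emeasure (bessel_mu lam) {1..2}"
    using lam by (intro emeasure_bessel_mu_ge) (auto intro: ge_one_powr_ge_zero)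
  then have "0 < m"
    using fin by (simp add: m_def measure_def enn2real_positive_iff less_le_trans[of 0 1])
  show ?thesis
  proof
    show "0 < c * m"
      using \<open>0 < c\<close> \<open>0 < m\<close> by simp
    fix x :: real
    assume "4 \<le> x"
    let ?p = "x powr (2*lam+1)"
    have K_bounds: "c / ?p * indicator {1..2} y \<le> - riesz_kernel lam x y * indicator {1..2} y"
      "\<bar>riesz_kernel lam x y * indicator {1..2} y\<bar> \<le> C / ?p * indicator {1..2} y" for y
    proof -
      have "0 < c / ?p"
        using \<open>0 < c\<close> \<open>4 \<le> x\<close> by simp
      then show "c / ?p * indicator {1..2} y \<le> - riesz_kernel lam x y * indicator {1..2} y"
        "\<bar>riesz_kernel lam x y * indicator {1..2} y\<bar> \<le> C / ?p * indicator {1..2} y"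
        using K_lower[of x y] K_upper[of x y] \<open>4 \<le> x\<close> by (auto split: split_indicator)
    qed
    have indicator_int: "integrable (bessel_mu lam) (\<lambda>y. k * indicator {1..2} y)" for k :: real
      using fin by (intro integrable_mult_right) (auto intro: sets_bessel_muI simp: integrable_indicator_iff Int_absorb2 subset_eq)
    have "\<bar>riesz_kernel lam x y * indicator {1..2} y\<bar> \<le> \<bar>C / ?p * indicator {1..2} y\<bar>" for y
      using K_bounds(2)[of y] abs_ge_self order_trans by blast
    then have K_int: "integrable (bessel_mu lam) (\<lambda>y. riesz_kernel lam x y * indicator {1..2} y)"
      by (intro Bochner_Integration.integrable_bound[OF indicator_int[of "C / ?p"]] AE_I2)
        (auto intro: borel_measurable_bessel_mu)
    have "c * m / ?p = (\<integral>y. c / ?p * indicator {1..2} y \<partial>bessel_mu lam)"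
      using fin by (simp add: m_def sets_bessel_muI Int_absorb2 subset_eq)
    also have "\<dots> \<le> (\<integral>y. - riesz_kernel lam x y * indicator {1..2} y \<partial>bessel_mu lam)"
      using K_int K_bounds(1) by (intro integral_mono indicator_int) auto
    finally show "c * m / ?p \<le> - (\<integral>y. riesz_kernel lam x y * indicator {1..2} y \<partial>bessel_mu lam)"
      by simp
  qed
qed

section \<open>\<open>ln_plus (x/3)\<close> has bounded mean oscillation\<close>

lemma set_integrable_const_finite:
  assumes "A \<in> sets M" "emeasure M A < \<infinity>"
  shows "set_integrable M A (\<lambda>_. c::real)"
  unfolding set_integrable_def using assms
  by (intro integrable_scaleR_left) (simp add: integrable_indicator_iff Int_absorb2 sets.sets_into_space)

lemma mean_oscillation_le_deviation:
  fixes f :: "'a \<Rightarrow> real"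
  assumes A: "A \<in> sets M" "emeasure M A < \<infinity>" "0 < measure M A" and f: "set_integrable M A f"
  shows "(1 / measure M A) * (LINT y:A|M. \<bar>f y - (1 / measure M A) * (LINT y:A|M. f y)\<bar>)
          \<le> 2 * ((1 / measure M A) * (LINT y:A|M. \<bar>f y - c\<bar>))"
proof -
  define m where "m = measure M A"
  define v where "v = (1 / m) * (LINT y:A|M. f y)"
  define L where "L = (LINT y:A|M. \<bar>f y - c\<bar>)"
  have const: "set_integrable M A (\<lambda>y. k)" for k :: real
    by (rule set_integrable_const_finite[OF A(1,2)])
  have int_const: "(LINT y:A|M. k) = m * k" for k :: real
    using set_integral_const[OF A(1), of k] A(2) by (simp add: m_def)
  have dev_int: "set_integrable M A (\<lambda>y. \<bar>f y - k\<bar>)" for k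
    by (intro set_integrable_abs set_integral_diff(1) f const)
  have "v - c = (1 / m) * (LINT y:A|M. f y - c)"
    using set_integral_diff(2)[OF f const] int_const A(3) by (simp add: v_def m_def field_simps)
  then have "m * \<bar>c - v\<bar> = \<bar>LINT y:A|M. f y - c\<bar>"
    using A(3) by (simp add: m_def abs_minus_commute[of c v] abs_mult)
  also have "\<dots> \<le> L"
    using set_integral_norm_bound[OF set_integral_diff(1)[OF f const]] by (simp add: L_def)
  finally have "m * \<bar>c - v\<bar> \<le> L" .
  moreover have "(LINT y:A|M. \<bar>f y - v\<bar>) \<le> (LINT y:A|M. \<bar>f y - c\<bar> + \<bar>c - v\<bar>)"
    by (rule set_integral_mono[OF dev_int set_integral_add(1)[OF dev_int const]]) auto
  moreover have "(LINT y:A|M. \<bar>f y - c\<bar> + \<bar>c - v\<bar>) = L + m * \<bar>c - v\<bar>"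
    using dev_int const int_const by (simp add: L_def set_integral_add(2))
  ultimately have "(LINT y:A|M. \<bar>f y - v\<bar>) \<le> 2 * L"
    by linarith
  then show ?thesis
    using A(3) unfolding m_def [symmetric] v_def [symmetric] L_def [symmetric]
    by (simp add: divide_right_mono)
qed

lemma set_integrable_ln_plus_third:
  assumes "0 \<le> lam" "0 \<le> a"
  shows "set_integrable (bessel_mu lam) {a<..<b} (\<lambda>y. \<bar>ln_plus (y/3) - c\<bar>)"
    and "set_integrable (bessel_mu lam) {a<..<b} (\<lambda>y. ln_plus (y/3))"
proof -
  have bound: "set_integrable (bessel_mu lam) {a<..<b} (\<lambda>y. ln_plus (b/3) + \<bar>c\<bar>)"
    using assms by (intro set_integrable_const_finite sets_bessel_muI emeasure_bessel_mu_interval_finite) auto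
  have "norm (ln_plus (y/3)) \<le> norm (ln_plus (b/3) + \<bar>c\<bar>)"
    "norm \<bar>ln_plus (y/3) - c\<bar> \<le> norm (ln_plus (b/3) + \<bar>c\<bar>)" if "y \<in> {a<..<b}" for y
    using ln_plus_increment_bounds(1)[of "y/3" "b/3"] ln_plus_nonneg[of "y/3"] that assms by auto
  then have "AE y in bessel_mu lam. y \<in> {a<..<b} \<longrightarrow> norm (ln_plus (y/3)) \<le> norm (ln_plus (b/3) + \<bar>c\<bar>)"
    "AE y in bessel_mu lam. y \<in> {a<..<b} \<longrightarrow> norm \<bar>ln_plus (y/3) - c\<bar> \<le> norm (ln_plus (b/3) + \<bar>c\<bar>)"
    by (intro AE_I2 impI, blast)+
  then show "set_integrable (bessel_mu lam) {a<..<b} (\<lambda>y. \<bar>ln_plus (y/3) - c\<bar>)"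
    "set_integrable (bessel_mu lam) {a<..<b} (\<lambda>y. ln_plus (y/3))"
    by (auto intro!: set_integrable_bound[OF bound] borel_measurable_bessel_mu
        simp: set_borel_measurable_def)
qed

lemma mean_deviation_ln_plus_third_short:
  assumes "0 \<le> lam" "0 < a" "a < b" "b \<le> 2*a"
  shows "(1 / measure (bessel_mu lam) {a<..<b}) *
           (LINT y:{a<..<b}|bessel_mu lam. \<bar>ln_plus (y/3) - ln_plus (a/3)\<bar>) \<le> ln 2"
proof -
  let ?M = "bessel_mu lam" and ?B = "{a<..<b}"
  have B_sets: "?B \<in> sets ?M"
    using assms by (intro sets_bessel_muI) auto
  have B_fin: "emeasure ?M ?B < \<infinity>"
    using emeasure_bessel_mu_interval_finite[of lam a b] assms by simp
  have "(LINT y:?B|?M. \<bar>ln_plus (y/3) - ln_plus (a/3)\<bar>) \<le> (LINT y:?B|?M. ln (2::real))"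
  proof (rule set_integral_mono)
    show "set_integrable ?M ?B (\<lambda>y. \<bar>ln_plus (y/3) - ln_plus (a/3)\<bar>)"
      using assms by (intro set_integrable_ln_plus_third) auto
    show "set_integrable ?M ?B (\<lambda>y. ln (2::real))"
      using B_sets B_fin by (rule set_integrable_const_finite)
    fix y assume y: "y \<in> ?B"
    then have "\<bar>ln_plus (y/3) - ln_plus (a/3)\<bar> \<le> ln (y/3) - ln (a/3)"
      using ln_plus_increment_bounds[of "a/3" "y/3"] assms by auto
    also have "\<dots> = ln y - ln a"
      using y assms by (simp add: ln_div)
    also have "\<dots> \<le> ln (2*a) - ln a"
      using y assms by simp
    also have "\<dots> = ln 2"
      using assms by (simp add: ln_mult)
    finally show "\<bar>ln_plus (y/3) - ln_plus (a/3)\<bar> \<le> ln 2" .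
  qed
  also have "\<dots> = measure ?M ?B * ln 2"
    using B_sets B_fin by (simp add: set_integral_const)
  finally show ?thesis
    using measure_bessel_mu_interval_pos[of lam a b] assms by (simp add: field_simps)
qed

lemma powr_mult_ln_ratio_le:
  fixes y b lam :: real
  assumes "0 < lam" "0 < y" "y \<le> b"
  shows "y powr (2*lam) * (ln b - ln y) \<le> b powr (2*lam) / lam"
proof -
  have "ln b - ln y = ln (b/y)"
    using assms by (simp add: ln_div)
  also have "\<dots> \<le> (b/y) powr lam / lam"
    using assms by (intro ln_powr_bound) auto
  finally have "y powr (2*lam) * (ln b - ln y) \<le> y powr (2*lam) * ((b/y) powr lam / lam)"
    by (intro mult_left_mono) auto
  also have "\<dots> = y powr lam * b powr lam / lam"
    using assms by (simp add: powr_divide powr_add[symmetric] field_simps)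
  also have "\<dots> \<le> b powr lam * b powr lam / lam"
    using assms by (intro divide_right_mono mult_right_mono powr_mono2) auto
  also have "\<dots> = b powr (2*lam) / lam"
    by (simp add: powr_add[symmetric])
  finally show ?thesis .
qed

lemma set_integral_ln_plus_third_deviation_le:
  assumes lam: "0 < lam" and "0 \<le> a" "a < b"
  shows "(LINT y:{a<..<b}|bessel_mu lam. \<bar>ln_plus (y/3) - ln_plus (b/3)\<bar>) \<le> b * (b powr (2*lam) / lam)"
proof -
  let ?B = "{a<..<b}"
  define g where "g y = indicator ?B y * \<bar>ln_plus (y/3) - ln_plus (b/3)\<bar>" for y
  have g_meas [measurable]: "g \<in> borel_measurable borel"
    unfolding g_def by measurable
  have pointwise: "indicator {0<..} y * (y powr (2*lam) * g y) \<le> indicator ?B y * (b powr (2*lam) / lam)" for y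
  proof (cases "y \<in> ?B")
    case True
    then have y: "0 < y" "y < b"
      using assms by auto
    then have "y powr (2*lam) * \<bar>ln_plus (y/3) - ln_plus (b/3)\<bar> \<le> y powr (2*lam) * (ln b - ln y)"
      using ln_plus_increment_bounds[of "y/3" "b/3"] by (intro mult_left_mono) (auto simp: ln_div)
    also have "\<dots> \<le> b powr (2*lam) / lam"
      using y lam by (intro powr_mult_ln_ratio_le) auto
    finally show ?thesis
      using True y by (simp add: g_def)
  qed (simp add: g_def)
  have bound_int: "integrable lborel (\<lambda>y. indicator ?B y * (b powr (2*lam) / lam))"
    using assms by (intro integrable_mult_left) (simp add: integrable_indicator_iff)
  have "norm (indicator {0<..} y * (y powr (2*lam) * g y)) \<le> norm (indicator ?B y * (b powr (2*lam) / lam))"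
    for y
  proof -
    have "0 \<le> indicator {0<..} y * (y powr (2*lam) * g y)"
      by (simp add: g_def)
    then show ?thesis
      by (simp only: real_norm_def abs_of_nonneg) (rule order_trans[OF pointwise abs_ge_self])
  qed
  then have int: "integrable lborel (\<lambda>y. indicator {0<..} y * (y powr (2*lam) * g y))"
    by (intro Bochner_Integration.integrable_bound[OF bound_int] AE_I2) auto
  have "(LINT y:?B|bessel_mu lam. \<bar>ln_plus (y/3) - ln_plus (b/3)\<bar>) = (\<integral>y. g y \<partial>bessel_mu lam)"
    by (simp add: set_lebesgue_integral_def g_def)
  also have "\<dots> = (\<integral>y. indicator {0<..} y * (y powr (2*lam) * g y) \<partial>lborel)"
    by (rule integral_bessel_mu[OF g_meas])
  also have "\<dots> \<le> (\<integral>y. indicator ?B y * (b powr (2*lam) / lam) \<partial>lborel)"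
    by (rule integral_mono[OF int bound_int pointwise])
  also have "\<dots> = (b - a) * (b powr (2*lam) / lam)"
    using assms by simp
  also have "\<dots> \<le> b * (b powr (2*lam) / lam)"
    using assms by (intro mult_right_mono) auto
  finally show ?thesis .
qed

lemma mean_deviation_ln_plus_third_long:
  assumes lam: "0 < lam" and "0 \<le> a" "2*a < b"
  shows "(1 / measure (bessel_mu lam) {a<..<b}) *
           (LINT y:{a<..<b}|bessel_mu lam. \<bar>ln_plus (y/3) - ln_plus (b/3)\<bar>) \<le> 2 powr (2*lam+1) / lam"
proof -
  let ?M = "bessel_mu lam" and ?B = "{a<..<b}"
  have "0 < b"
    using assms by linarith
  have upper: "(LINT y:?B|?M. \<bar>ln_plus (y/3) - ln_plus (b/3)\<bar>) \<le> b * (b powr (2*lam) / lam)"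
    using assms by (intro set_integral_ln_plus_third_deviation_le) auto
  have lower: "(b/2) powr (2*lam) * (b/2) \<le> measure ?M ?B"
    using measure_bessel_mu_interval_ge[of lam a "b/2" b] assms by auto
  have "0 < (b/2) powr (2*lam) * (b/2)"
    using \<open>0 < b\<close> by simp
  then have "(1 / measure ?M ?B) * (LINT y:?B|?M. \<bar>ln_plus (y/3) - ln_plus (b/3)\<bar>)
      \<le> b * (b powr (2*lam) / lam) / ((b/2) powr (2*lam) * (b/2))"
    using upper lower \<open>0 < b\<close> lam by (simp only: mult_1 times_divide_eq_left) (rule frac_le, auto)
  also have "\<dots> = 2 powr (2*lam+1) / lam"
    using \<open>0 < b\<close> by (simp add: powr_divide powr_add field_simps)
  finally show ?thesis .
qed

text \<open>On short intervals \<open>ln_plus (y/3)\<close> varies by at most \<open>ln 2\<close>; on long ones \<open>(a,b)\<close> with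
  \<open>2a < b\<close> most of the \<open>mu\<close>-mass sits near \<open>b\<close>, where the logarithm is close to its value at \<open>b\<close>.\<close>
lemma BMO_bessel_ln_plus_third:
  assumes lam: "0 < lam"
  shows "BMO_bessel lam (\<lambda>x. ln_plus (x/3))"
  unfolding BMO_bessel_def
proof (intro conjI allI impI exI)
  show "(\<lambda>x. ln_plus (x/3)) \<in> borel_measurable (bessel_mu lam)"
    by (intro borel_measurable_bessel_mu) measurable
  fix a b :: real
  assume ab: "0 \<le> a \<and> a < b"
  then show "set_integrable (bessel_mu lam) {a<..<b} (\<lambda>x. ln_plus (x/3))"
    using lam by (intro set_integrable_ln_plus_third) auto
  let ?M = "bessel_mu lam" and ?B = "{a<..<b}"
  have deviation: "(1 / measure ?M ?B) * (LINT y:?B|?M. \<bar>ln_plus (y/3) - bessel_avg lam (\<lambda>x. ln_plus (x/3)) a b\<bar>)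
      \<le> 2 * ((1 / measure ?M ?B) * (LINT y:?B|?M. \<bar>ln_plus (y/3) - c\<bar>))" for c
    unfolding bessel_avg_def using ab lam
    by (intro mean_oscillation_le_deviation sets_bessel_muI emeasure_bessel_mu_interval_finite
        measure_bessel_mu_interval_pos set_integrable_ln_plus_third) auto
  show "(1 / measure ?M ?B) * (LINT y:?B|?M. \<bar>ln_plus (y/3) - bessel_avg lam (\<lambda>x. ln_plus (x/3)) a b\<bar>)
      \<le> 2 * max (ln 2) (2 powr (2*lam+1) / lam)"
  proof (cases "b \<le> 2*a")
    case True
    then show ?thesis
      using deviation[of "ln_plus (a/3)"] mean_deviation_ln_plus_third_short[of lam a b] ab lam by auto
  next
    case False
    then show ?thesis
      using deviation[of "ln_plus (b/3)"] mean_deviation_ln_plus_third_long[of lam a b] ab lam by auto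
  qed
qed

section \<open>Failure of the weak type (1,1) estimate\<close>

lemma bessel_mu_not_weak_type_tail:
  fixes g :: "real \<Rightarrow> real"
  assumes lam: "0 < lam" and "0 < a" "0 < c" and g_meas: "g \<in> borel_measurable borel"
    and g_ge: "\<And>x. a \<le> x \<Longrightarrow> c * ln (x / a) / x powr (2*lam+1) \<le> \<bar>g x\<bar>"
  shows "\<not> (\<exists>D. \<forall>t>0. emeasure (bessel_mu lam) {x\<in>{0<..}. t < \<bar>g x\<bar>} \<le> ennreal (D / t))"
proof
  assume "\<exists>D. \<forall>t>0. emeasure (bessel_mu lam) {x\<in>{0<..}. t < \<bar>g x\<bar>} \<le> ennreal (D / t)"
  then obtain D where weak: "\<And>t. 0 < t \<Longrightarrow> emeasure (bessel_mu lam) {x\<in>{0<..}. t < \<bar>g x\<bar>} \<le> ennreal (D / t)"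
    by blast
  define p where "p = 2*lam+1"
  txt \<open>On \<open>[Z, 2Z]\<close> the function exceeds \<open>2t\<close>, and \<open>t * mu [Z, 2Z] \<ge> c ln (Z/a) / 2^(p+1)\<close>, which the
    choice of \<open>Z\<close> makes larger than \<open>D\<close>.\<close>
  define Z where "Z = a * exp (2 * 2 powr p * \<bar>D\<bar> / c + 1)"
  have ln_Z: "ln (Z / a) = 2 * 2 powr p * \<bar>D\<bar> / c + 1"
    using \<open>0 < a\<close> by (simp add: Z_def)
  have "a \<le> Z"
    using \<open>0 < a\<close> \<open>0 < c\<close> by (simp add: Z_def)
  then have "0 < Z"
    using \<open>0 < a\<close> by linarith
  define t where "t = c * ln (Z / a) / (2 * Z) powr p / 2"
  have "0 < t"
    using \<open>0 < c\<close> \<open>0 < Z\<close> ln_Z by (simp add: t_def add_nonneg_pos)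
  have t_less: "t < c * ln (Z / a) / (2 * Z) powr p"
    using \<open>0 < t\<close> unfolding t_def by linarith
  have level: "{Z..2*Z} \<subseteq> {x\<in>{0<..}. t < \<bar>g x\<bar>}"
  proof
    fix x assume x: "x \<in> {Z..2*Z}"
    have "0 \<le> ln (Z / a)"
      using \<open>0 < c\<close> ln_Z by (simp add: add_nonneg_pos)
    moreover have "ln (Z / a) \<le> ln (x / a)"
      using x \<open>0 < a\<close> \<open>0 < Z\<close> by (simp add: divide_right_mono)
    ultimately have "c * ln (Z / a) / (2 * Z) powr p \<le> c * ln (x / a) / x powr p"
      using x \<open>0 < c\<close> \<open>0 < Z\<close> lam
      by (intro frac_le mult_left_mono powr_mono2) (auto simp: p_def)
    also have "\<dots> \<le> \<bar>g x\<bar>"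
      using g_ge[of x] x \<open>a \<le> Z\<close> by (simp add: p_def)
    finally show "x \<in> {x\<in>{0<..}. t < \<bar>g x\<bar>}"
      using x t_less \<open>0 < Z\<close> by auto
  qed
  have "ennreal (Z powr p) \<le> emeasure (bessel_mu lam) {Z..2*Z}"
    using \<open>0 < Z\<close> lam unfolding p_def by (intro emeasure_bessel_mu_dyadic_ge) auto
  also have "\<dots> \<le> emeasure (bessel_mu lam) {x\<in>{0<..}. t < \<bar>g x\<bar>}"
    using level g_meas by (intro emeasure_mono sets_bessel_muI) auto
  also have "\<dots> \<le> ennreal (D / t)"
    using weak[OF \<open>0 < t\<close>] .
  finally have "Z powr p \<le> D / t"
    using \<open>0 < Z\<close> by (cases "0 \<le> D / t") (auto simp: ennreal_le_iff ennreal_neg)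
  then have "Z powr p * t \<le> D"
    using \<open>0 < t\<close> by (simp add: le_divide_eq)
  moreover have "Z powr p * t = c * ln (Z / a) / (2 * 2 powr p)"
    using \<open>0 < Z\<close> by (simp add: t_def powr_mult field_simps)
  moreover have "c * ln (Z / a) / (2 * 2 powr p) = \<bar>D\<bar> + c / (2 * 2 powr p)"
    using \<open>0 < c\<close> unfolding ln_Z by (simp add: field_simps)
  moreover have "0 < c / (2 * 2 powr p)"
    using \<open>0 < c\<close> by simp
  ultimately show False
    by linarith
qed

lemma borel_measurable_riesz_commutator_ln_plus_indicator:
  "riesz_commutator lam (\<lambda>x. ln_plus (x/3)) (indicator {1..2}) \<in> borel_measurable borel"
proof -
  have "(\<lambda>x. \<integral>y. riesz_kernel lam x y * indicator {1..2} y \<partial>bessel_mu lam) \<in> borel_measurable borel"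
    by (subst integral_bessel_mu) measurable
  then show ?thesis
    unfolding riesz_commutator_ln_plus_indicator[abs_def] by measurable
qed

lemma abs_riesz_commutator_ln_plus_indicator_ge:
  assumes "0 < lam"
  obtains c where "0 < c" "\<And>x. 4 \<le> x \<Longrightarrow>
    c * ln (x/4) / x powr (2*lam+1) \<le> \<bar>riesz_commutator lam (\<lambda>x. ln_plus (x/3)) (indicator {1..2}) x\<bar>"
proof -
  obtain c where "0 < c" and lower: "\<And>x. 4 \<le> x \<Longrightarrow>
      c / x powr (2*lam+1) \<le> - (\<integral>y. riesz_kernel lam x y * indicator {1..2} y \<partial>bessel_mu lam)"
    using integral_riesz_kernel_indicator_lower[OF assms] by blast
  show ?thesis
  proof (rule that[OF \<open>0 < c\<close>])
    fix x :: real
    assume "4 \<le> x"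
    have "0 \<le> ln (x/4)" "ln (x/4) \<le> ln_plus (x/3)"
      using \<open>4 \<le> x\<close> by (simp_all add: ln_plus_eq_ln)
    then have "c * ln (x/4) / x powr (2*lam+1) \<le>
        ln_plus (x/3) * - (\<integral>y. riesz_kernel lam x y * indicator {1..2} y \<partial>bessel_mu lam)"
      using lower[OF \<open>4 \<le> x\<close>] \<open>0 < c\<close>
      by (simp only: times_divide_eq_right[symmetric] mult.commute[of c]) (intro mult_mono, auto)
    also have "\<dots> \<le> ln_plus (x/3) * \<bar>\<integral>y. riesz_kernel lam x y * indicator {1..2} y \<partial>bessel_mu lam\<bar>"
      by (intro mult_left_mono) (auto simp: ln_plus_nonneg)
    also have "\<dots> = \<bar>riesz_commutator lam (\<lambda>x. ln_plus (x/3)) (indicator {1..2}) x\<bar>"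
      by (simp add: riesz_commutator_ln_plus_indicator abs_mult ln_plus_nonneg)
    finally show "c * ln (x/4) / x powr (2*lam+1) \<le>
        \<bar>riesz_commutator lam (\<lambda>x. ln_plus (x/3)) (indicator {1..2}) x\<bar>" .
  qed
qed

theorem theorem1p13:
  fixes lam :: real
  assumes "lam > 0"
  shows "\<exists>b0. BMO_bessel lam b0 \<and>
    \<not> (\<exists>C. \<forall>f t. bdd_cpt_supp f \<longrightarrow> t > 0 \<longrightarrow>
          emeasure (bessel_mu lam) {x\<in>{0<..}. \<bar>riesz_commutator lam b0 f x\<bar> > t}
            \<le> ennreal (C / t * (\<integral>x. \<bar>f x\<bar> \<partial>bessel_mu lam)))"
proof (intro exI conjI notI)
  show "BMO_bessel lam (\<lambda>x. ln_plus (x/3))"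
    using assms by (rule BMO_bessel_ln_plus_third)
  let ?b = "\<lambda>x. ln_plus (x/3)" and ?f = "indicator {1..2} :: real \<Rightarrow> real"
  let ?level = "\<lambda>t. {x\<in>{0<..}. t < \<bar>riesz_commutator lam ?b ?f x\<bar>}"
  assume "\<exists>C. \<forall>f t. bdd_cpt_supp f \<longrightarrow> t > 0 \<longrightarrow>
      emeasure (bessel_mu lam) {x\<in>{0<..}. \<bar>riesz_commutator lam ?b f x\<bar> > t}
        \<le> ennreal (C / t * (\<integral>x. \<bar>f x\<bar> \<partial>bessel_mu lam))"
  then obtain C where weak: "\<And>f t. bdd_cpt_supp f \<Longrightarrow> t > 0 \<Longrightarrow>
      emeasure (bessel_mu lam) {x\<in>{0<..}. \<bar>riesz_commutator lam ?b f x\<bar> > t}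
        \<le> ennreal (C / t * (\<integral>x. \<bar>f x\<bar> \<partial>bessel_mu lam))"
    by blast
  have "bdd_cpt_supp ?f"
    unfolding bdd_cpt_supp_def by (intro conjI exI[of _ 1] exI[of _ 2]) (auto split: split_indicator)
  then have "emeasure (bessel_mu lam) (?level t) \<le> ennreal (C * (\<integral>x. \<bar>?f x\<bar> \<partial>bessel_mu lam) / t)"
    if "0 < t" for t
    using weak[of ?f t] that by simp
  moreover obtain c where "0 < c" "\<And>x. 4 \<le> x \<Longrightarrow>
      c * ln (x/4) / x powr (2*lam+1) \<le> \<bar>riesz_commutator lam ?b ?f x\<bar>"
    using abs_riesz_commutator_ln_plus_indicator_ge[OF assms] by blast
  then have "\<not> (\<exists>D. \<forall>t>0. emeasure (bessel_mu lam) (?level t) \<le> ennreal (D / t))"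
    using borel_measurable_riesz_commutator_ln_plus_indicator
    by (intro bessel_mu_not_weak_type_tail[OF assms, of 4 c]) auto
  ultimately show False
    by blast
qed

end
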